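(* Let $\hat H$, $\tilde\tau>0$ and $\Phi$ be as in the context. If $(\alpha,\beta)$ lies in $$\mathcal{R}=\{(\alpha,\beta)\in\mathbb{R}^2:\ |\alpha|-1<\beta<1\},$$ then every root $w$ of $\Phi(w)=0$ satisfies $\operatorname{Re} w<0$, i.e. the equilibrium is locally asymptotically stable, regardless of the delay kernel and of $\tilde\tau>0$. Moreover $\mathcal{R}\subset\mathcal{S}=\{\alpha<2,\ \alpha-1<\beta<(\alpha-4)^2/4\}$.
   Context: Let $g:[0,\infty)\to[0,\infty)$ be a probability density with mean $\int_0^\infty t\,g(t)\,dt=1$ (or the Dirac measure at $1$), and let $\hat H(w)=\int_0^\infty g(s)e^{-ws}\,ds$; then $\hat H(0)=1$, $\hat H'(0)=-1$, and $|\hat H(w)|\le 1$ for $\operatorname{Re} w\ge 0$. The delay kernel with mean $\tau>0$ is $h(t)=\tau^{-1}g(t/\tau)$. For a time constant $\bar\tau>0$ put $\tilde\tau=\tau/\bar\tau$. For $\alpha,\beta\in\mathbb{R}$ the (rescaled) characteristic equation of the linearized coupled Wilson–Cowan system is $$\Phi(w):=(w+\tilde\tau)^4-\alpha\,\tilde\tau^2(w+\tilde\tau)^2\hat H(w)^2+\beta\,\tilde\tau^4\hat H(w)^4=0,$$ equivalently $Q(w)^2-\alpha Q(w)+\beta=0$ with $Q(w)=\big(\frac{w+\tilde\tau}{\tilde\tau\hat H(w)}\big)^2$. The equilibrium is locally asymptotically stable iff all roots have negative real part. $\mathcal{S}$ is the no-delay stability region. *)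

theory Defs
  imports "HOL-Analysis.Analysis"
begin

definition delay_density :: "(real \<Rightarrow> real) \<Rightarrow> bool" where
  "delay_density g \<longleftrightarrow>
     (\<forall>t\<ge>0. g t \<ge> 0) \<and>
     g integrable_on {0..} \<and> integral {0..} g = 1 \<and>
     (\<lambda>t. t * g t) integrable_on {0..} \<and> integral {0..} (\<lambda>t. t * g t) = 1"

definition laplace_kernel :: "(real \<Rightarrow> real) \<Rightarrow> complex \<Rightarrow> complex" where
  "laplace_kernel g w = integral {0..} (\<lambda>s. complex_of_real (g s) * exp (- w * complex_of_real s))"

text \<open>Hhat is the Laplace transform of an admissible kernel: a probability density with
  mean 1, or the Dirac measure at 1 (Hhat(w) = e^{-w}).\<close>
definition admissible_Hhat :: "(complex \<Rightarrow> complex) \<Rightarrow> bool" where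
  "admissible_Hhat H \<longleftrightarrow>
     (\<exists>g. delay_density g \<and> H = laplace_kernel g) \<or> H = (\<lambda>w. exp (- w))"

definition Phi :: "real \<Rightarrow> real \<Rightarrow> real \<Rightarrow> (complex \<Rightarrow> complex) \<Rightarrow> complex \<Rightarrow> complex" where
  "Phi \<alpha> \<beta> \<tau>t H w =
     (w + of_real \<tau>t) ^ 4
     - of_real \<alpha> * of_real \<tau>t ^ 2 * (w + of_real \<tau>t) ^ 2 * H w ^ 2
     + of_real \<beta> * of_real \<tau>t ^ 4 * H w ^ 4"

definition region_R :: "(real \<times> real) set" where
  "region_R = {(\<alpha>, \<beta>). \<bar>\<alpha>\<bar> - 1 < \<beta> \<and> \<beta> < 1}"

text \<open>No-delay stability region S.\<close>
definition region_S :: "(real \<times> real) set" where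
  "region_S = {(\<alpha>, \<beta>). \<alpha> < 2 \<and> \<alpha> - 1 < \<beta> \<and> \<beta> < (\<alpha> - 4)^2 / 4}"

end

theory Submission
  imports Defs
begin

text \<open>For \<open>Re w \<ge> 0\<close> and \<open>t > 0\<close> we have \<open>|t H(w)| \<le> t \<le> Re (w + t) \<le> |w + t|\<close>, so
  \<open>Q(w) = ((w + t) / (t H(w)))\<^sup>2\<close> has modulus at least 1.  But \<open>\<Phi>(w) = 0\<close> makes \<open>Q(w)\<close> a root
  of \<open>q\<^sup>2 - \<alpha> q + \<beta>\<close>, and on \<open>\<R>\<close> both roots of this quadratic lie in the open unit disc:
  a real root with \<open>|q| \<ge> 1\<close> is excluded by the sign of the quadratic at \<open>\<plusminus>1\<close>, and a pair of
  conjugate roots has \<open>|q|\<^sup>2 = \<beta> < 1\<close>.\<close>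

lemma norm_laplace_kernel_le_1:
  assumes "delay_density g" "Re w \<ge> 0"
  shows "norm (laplace_kernel g w) \<le> 1"
proof -
  let ?f = "\<lambda>s. complex_of_real (g s) * exp (- w * complex_of_real s)"
  have g_int: "g integrable_on {0..}" and g_mass: "integral {0..} g = 1"
    and g_nonneg: "\<forall>t\<ge>0. g t \<ge> 0"
    using assms(1) unfolding delay_density_def by auto
  show ?thesis
  proof (cases "?f integrable_on {0..}")
    case True
    have "norm (integral {0..} ?f) \<le> integral {0..} g"
    proof (rule integral_norm_bound_integral[OF True g_int])
      fix s :: real assume "s \<in> {0..}"
      hence s: "s \<ge> 0" by simp
      have "norm (exp (- w * complex_of_real s)) \<le> 1"
        using s assms(2) by (simp add: norm_exp_eq_Re)
      hence "\<bar>g s\<bar> * norm (exp (- w * complex_of_real s)) \<le> \<bar>g s\<bar>"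
        by (simp add: mult_left_le)
      thus "norm (?f s) \<le> g s" using g_nonneg s by (simp add: norm_mult)
    qed
    thus ?thesis using g_mass by (simp add: laplace_kernel_def)
  next
    case False
    thus ?thesis by (simp add: laplace_kernel_def not_integrable_integral)
  qed
qed

lemma admissible_Hhat_norm_le_1:
  assumes "admissible_Hhat H" "Re w \<ge> 0"
  shows "norm (H w) \<le> 1"
  using assms norm_laplace_kernel_le_1 by (auto simp: admissible_Hhat_def norm_exp_eq_Re)

lemma real_quadratic_root_abs_less_1:
  fixes q \<alpha> \<beta> :: real
  assumes "\<bar>\<alpha>\<bar> - 1 < \<beta>" "\<beta> < 1" and root: "q\<^sup>2 - \<alpha> * q + \<beta> = 0"
  shows "\<bar>q\<bar> < 1"
proof (rule ccontr)
  assume "\<not> \<bar>q\<bar> < 1"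
  then consider "q \<ge> 1" | "q \<le> -1" by linarith
  then show False
  proof cases
    case 1
    have "(q - 1) * (q + 1 - \<alpha>) \<ge> 0" using 1 assms by (intro mult_nonneg_nonneg) auto
    then show False using root assms by (simp add: algebra_simps power2_eq_square)
  next
    case 2
    have "(- q - 1) * (- q + 1 + \<alpha>) \<ge> 0" using 2 assms by (intro mult_nonneg_nonneg) auto
    then show False using root assms by (simp add: algebra_simps power2_eq_square)
  qed
qed

lemma quadratic_root_norm_less_1:
  fixes q :: complex and \<alpha> \<beta> :: real
  assumes "\<bar>\<alpha>\<bar> - 1 < \<beta>" "\<beta> < 1" and root: "q\<^sup>2 - of_real \<alpha> * q + of_real \<beta> = 0"
  shows "norm q < 1"
proof -
  obtain a b where q: "q = Complex a b" by (cases q)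
  from root have re: "a\<^sup>2 - b\<^sup>2 - \<alpha> * a + \<beta> = 0" and im: "(2 * a - \<alpha>) * b = 0"
    unfolding q by (simp_all add: complex_eq_iff power2_eq_square algebra_simps)
  show ?thesis
  proof (cases "b = 0")
    case True
    then show ?thesis
      using real_quadratic_root_abs_less_1[OF assms(1,2), of a] re q by (simp add: cmod_def)
  next
    case False
    with im have "\<alpha> = 2 * a" by simp
    with re have "a\<^sup>2 + b\<^sup>2 = \<beta>" by (simp add: power2_eq_square algebra_simps)
    then have "(norm q)\<^sup>2 < 1" using q assms(2) by (simp add: cmod_power2)
    then show ?thesis by (simp add: power_less_one_iff)
  qed
qed

definition char_ratio :: "real \<Rightarrow> (complex \<Rightarrow> complex) \<Rightarrow> complex \<Rightarrow> complex" where
  "char_ratio \<tau>t H w = ((w + of_real \<tau>t) / (of_real \<tau>t * H w))\<^sup>2"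

lemma Phi_eq_char_ratio:
  assumes "of_real \<tau>t * H w \<noteq> 0"
  shows "Phi \<alpha> \<beta> \<tau>t H w = (of_real \<tau>t * H w) ^ 4 *
    ((char_ratio \<tau>t H w)\<^sup>2 - of_real \<alpha> * char_ratio \<tau>t H w + of_real \<beta>)"
  using assms by (simp add: Phi_def char_ratio_def field_simps)

lemma norm_char_ratio_ge_1:
  assumes "admissible_Hhat H" "\<tau>t > 0" "Re w \<ge> 0" "H w \<noteq> 0"
  shows "norm (char_ratio \<tau>t H w) \<ge> 1"
proof -
  have "norm (of_real \<tau>t * H w) \<le> \<tau>t"
    using admissible_Hhat_norm_le_1[OF assms(1,3)] assms(2) by (simp add: norm_mult mult_left_le)
  also have "\<tau>t \<le> Re (w + of_real \<tau>t)" using assms(3) by simp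
  also have "\<dots> \<le> norm (w + of_real \<tau>t)" by (rule complex_Re_le_cmod)
  finally have "norm (of_real \<tau>t * H w) \<le> norm (w + of_real \<tau>t)" .
  then have "1 \<le> norm ((w + of_real \<tau>t) / (of_real \<tau>t * H w))"
    using assms(2,4) by (simp add: norm_divide field_simps)
  then show ?thesis by (simp add: char_ratio_def norm_power one_le_power)
qed

lemma region_R_subset_region_S: "region_R \<subseteq> region_S"
proof
  fix p assume "p \<in> region_R"
  then obtain a b where p: "p = (a, b)" and ab: "\<bar>a\<bar> - 1 < b" "b < 1"
    by (auto simp: region_R_def)
  then have "a < 2" by simp
  then have "2\<^sup>2 < (4 - a)\<^sup>2" by (intro power_strict_mono) auto
  then show "p \<in> region_S"
    using p ab \<open>a < 2\<close> by (auto simp: region_S_def power2_commute)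
qed

theorem theorem5:
  fixes H :: "complex \<Rightarrow> complex" and \<tau>t \<alpha> \<beta> :: real
  assumes "admissible_Hhat H"
    and "\<tau>t > 0"
    and "(\<alpha>, \<beta>) \<in> region_R"
  shows "(\<forall>w. Phi \<alpha> \<beta> \<tau>t H w = 0 \<longrightarrow> Re w < 0) \<and> region_R \<subseteq> region_S"
proof (intro conjI allI impI region_R_subset_region_S)
  fix w assume root: "Phi \<alpha> \<beta> \<tau>t H w = 0"
  show "Re w < 0"
  proof (rule ccontr)
    assume "\<not> Re w < 0"
    then have Re_w: "Re w \<ge> 0" by simp
    have H_w: "H w \<noteq> 0"
    proof
      assume "H w = 0"
      then have "w + of_real \<tau>t = 0" using root by (simp add: Phi_def)
      then show False using Re_w assms(2) by (simp add: complex_eq_iff)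
    qed
    then have "(char_ratio \<tau>t H w)\<^sup>2 - of_real \<alpha> * char_ratio \<tau>t H w + of_real \<beta> = 0"
      using root Phi_eq_char_ratio[of \<tau>t H w] assms(2) by simp
    then have "norm (char_ratio \<tau>t H w) < 1"
      using assms(3) quadratic_root_norm_less_1 by (auto simp: region_R_def)
    then show False using norm_char_ratio_ge_1[OF assms(1,2) Re_w H_w] by simp
  qed
qed

end
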